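(* Let $p(x,y)=\sum_{i,j\ge0}a_{i,j}x^iy^j$ be a polynomial in two variables with coefficients in a commutative ring (with $a_{i,j}=0$ if $i<0$ or $j<0$). For an integer $k\ge 0$ define $$I_k(p(x,y))=\sum_{i=0}^{k}\sum_{j=0}^{k-i}(-1)^j\binom{k-i}{j}a_{i,j}.$$ Then: (1) $I_k(x^m p(x,y))=I_{k-m}(p(x,y))$ for all integers $0\le m\le k$; (2) $I_k(y\,p(x,y))=-\sum_{s=0}^{k-1}I_s(p(x,y))$. *)

theory Defs
  imports "HOL-Computational_Algebra.Polynomial"
begin

text \<open>A bivariate polynomial p(x,y) is represented as an element of 'a poly poly:
  a polynomial in y whose coefficients are polynomials in x. Hence
  a_{i,j} = coeff (coeff p j) i.\<close>

definition bi_coeff :: "'a::zero poly poly \<Rightarrow> nat \<Rightarrow> nat \<Rightarrow> 'a" where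
  "bi_coeff p i j = coeff (coeff p j) i"

definition varX :: "'a::comm_ring_1 poly poly" where
  "varX = [:[:0, 1:]:]"

definition varY :: "'a::comm_ring_1 poly poly" where
  "varY = [:0, 1:]"

definition Ik :: "nat \<Rightarrow> 'a::comm_ring_1 poly poly \<Rightarrow> 'a" where
  "Ik k p = (\<Sum>i=0..k. \<Sum>j=0..k-i. (-1)^j * of_nat ((k-i) choose j) * bi_coeff p i j)"

end

theory Submission
  imports Defs
begin

text \<open>Multiplication by x^m shifts the x-index, so after discarding the vanishing terms
  I_k(x^m p) is literally I_{k-m}(p). Multiplication by y shifts the y-index, which turns
  binom(k-i, j) into binom(k-i, j+1); Pascal's rule then gives the recurrence
  I_{k+1}(y p) = I_k(y p) - I_k(p), and (2) follows by induction on k.\<close>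

lemma bi_coeff_varX_power_mult:
  "bi_coeff (varX ^ m * p) i j = (if i < m then 0 else bi_coeff p (i - m) j)"
proof -
  have varX_power: "varX ^ m = [:monom 1 m:]"
    by (simp add: varX_def poly_const_pow monom_altdef)
  show ?thesis
    unfolding bi_coeff_def varX_power by (simp add: coeff_monom_mult)
qed

lemma bi_coeff_varY_mult_0 [simp]: "bi_coeff (varY * p) i 0 = 0"
  by (simp add: bi_coeff_def varY_def)

lemma bi_coeff_varY_mult_Suc [simp]: "bi_coeff (varY * p) i (Suc j) = bi_coeff p i j"
  by (simp add: bi_coeff_def varY_def)

text \<open>The inner sum may run over any range j \<le> N with N \<ge> k, since binom(k-i, j) = 0 for j > k-i.\<close>

lemma Ik_eq_sum_atMost:
  assumes "k \<le> N"
  shows "Ik k p = (\<Sum>i\<le>k. \<Sum>j\<le>N. (-1)^j * of_nat ((k - i) choose j) * bi_coeff p i j)"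
  unfolding Ik_def atLeast0AtMost
proof (rule sum.cong[OF refl])
  fix i
  show "(\<Sum>j\<le>k - i. (-1)^j * of_nat ((k - i) choose j) * bi_coeff p i j)
      = (\<Sum>j\<le>N. (-1)^j * of_nat ((k - i) choose j) * bi_coeff p i j)"
    using assms by (intro sum.mono_neutral_left) (auto simp: binomial_eq_0 not_le)
qed

lemma Ik_varY_mult:
  assumes "k \<le> N"
  shows "Ik k (varY * p)
    = - (\<Sum>i\<le>k. \<Sum>j\<le>N. (-1)^j * of_nat ((k - i) choose Suc j) * bi_coeff p i j)"
proof -
  have "Ik k (varY * p)
      = (\<Sum>i\<le>k. \<Sum>j\<le>Suc N. (-1)^j * of_nat ((k - i) choose j) * bi_coeff (varY * p) i j)"
    using assms by (intro Ik_eq_sum_atMost) simp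
  then show ?thesis
    unfolding sum.atMost_Suc_shift by (simp add: sum_negf)
qed

lemma Ik_Suc_varY_mult: "Ik (Suc k) (varY * p) = Ik k (varY * p) - Ik k p"
proof -
  have "Ik (Suc k) (varY * p)
      = - (\<Sum>i\<le>Suc k. \<Sum>j\<le>Suc k. (-1)^j * of_nat ((Suc k - i) choose Suc j) * bi_coeff p i j)"
    by (rule Ik_varY_mult) simp
  also have "\<dots> = - (\<Sum>i\<le>k. \<Sum>j\<le>Suc k. (-1)^j * of_nat (Suc (k - i) choose Suc j) * bi_coeff p i j)"
    by (simp add: Suc_diff_le)
  also have "\<dots> = - (\<Sum>i\<le>k. \<Sum>j\<le>Suc k.
      (-1)^j * of_nat ((k - i) choose Suc j) * bi_coeff p i j
      + (-1)^j * of_nat ((k - i) choose j) * bi_coeff p i j)"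
    by (simp add: algebra_simps)
  also have "\<dots> = Ik k (varY * p) - Ik k p"
    unfolding sum.distrib Ik_varY_mult[of k "Suc k", OF le_SucI[OF order_refl]]
      Ik_eq_sum_atMost[of k "Suc k" p, OF le_SucI[OF order_refl]]
    by (simp add: algebra_simps)
  finally show ?thesis .
qed

lemma Ik_varY_mult_eq_neg_sum: "Ik k (varY * p) = - (\<Sum>s=0..<k. Ik s p)"
proof (induction k)
  case 0
  show ?case by (simp add: Ik_def)
next
  case (Suc k)
  then show ?case by (simp add: Ik_Suc_varY_mult)
qed

lemma Ik_varX_power_mult:
  assumes "m \<le> k"
  shows "Ik k (varX ^ m * p) = Ik (k - m) p"
proof -
  let ?g = "\<lambda>i. \<Sum>j\<le>k. (-1)^j * of_nat ((k - i) choose j) * bi_coeff (varX ^ m * p) i j"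
  have "Ik k (varX ^ m * p) = sum ?g {..k}"
    by (rule Ik_eq_sum_atMost) simp
  also have "\<dots> = sum ?g {m..k}"
    by (rule sum.mono_neutral_right) (auto simp: bi_coeff_varX_power_mult)
  also have "\<dots> = sum (\<lambda>i. ?g (i + m)) {0..k - m}"
    using sum.shift_bounds_cl_nat_ivl[of ?g 0 m "k - m"] assms by simp
  also have "\<dots> = (\<Sum>i\<le>k - m. \<Sum>j\<le>k. (-1)^j * of_nat ((k - m - i) choose j) * bi_coeff p i j)"
    by (simp add: atLeast0AtMost bi_coeff_varX_power_mult add.commute)
  also have "\<dots> = Ik (k - m) p"
    by (rule Ik_eq_sum_atMost[symmetric]) simp
  finally show ?thesis .
qed

theorem lemma3p2:
  fixes p :: "'a::comm_ring_1 poly poly" and k :: nat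
  shows "(\<forall>m. m \<le> k \<longrightarrow> Ik k (varX ^ m * p) = Ik (k - m) p)
         \<and> Ik k (varY * p) = - (\<Sum>s=0..<k. Ik s p)"
  using Ik_varX_power_mult Ik_varY_mult_eq_neg_sum by blast

end
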